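(* Let $R$ be a commutative ring, $n\ge 1$, $I$ an $n$-absorbing ideal of $R$, and $k$ an integer with $0\le k\le n$. Suppose that for every family $I_1,\dots,I_{n+1}$ of u-ideals of $R$ such that $I_1\cdots I_{n+1}\subseteq I$ and at least $k+1$ of the $I_j$ are principal ideals, $I$ contains the product of some $n$ of the $I_j$'s. Then the same holds with $k+1$ replaced by $k$: for every family $I_1,\dots,I_{n+1}$ of u-ideals of $R$ such that $I_1\cdots I_{n+1}\subseteq I$ and at least $k$ of the $I_j$ are principal, $I$ contains the product of some $n$ of the $I_j$'s.
   Context: All rings are commutative with identity $1\neq 0$. An ideal $I$ of $R$ is $n$-absorbing if whenever $x_1,\dots,x_{n+1}\in R$ and $x_1x_2\cdots x_{n+1}\in I$, the product of some $n$ of the $x_i$'s lies in $I$. An ideal $J$ of $R$ is a u-ideal if whenever $J\subseteq J_1\cup\cdots\cup J_m$ for finitely many ideals $J_1,\dots,J_m$ of $R$, then $J\subseteq J_i$ for some $i$. *)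

theory Defs
  imports "HOL-Algebra.Ideal_Product"
begin

definition n_absorbing :: "('a, 'b) ring_scheme \<Rightarrow> nat \<Rightarrow> 'a set \<Rightarrow> bool" where
  "n_absorbing R n I \<longleftrightarrow> ideal I R \<and>
     (\<forall>x :: nat \<Rightarrow> 'a. x ` {..n} \<subseteq> carrier R \<longrightarrow> finprod R x {..n} \<in> I \<longrightarrow>
        (\<exists>i\<le>n. finprod R x ({..n} - {i}) \<in> I))"

definition u_ideal :: "('a, 'b) ring_scheme \<Rightarrow> 'a set \<Rightarrow> bool" where
  "u_ideal R J \<longleftrightarrow> ideal J R \<and>
     (\<forall>Js. finite Js \<longrightarrow> (\<forall>J'\<in>Js. ideal J' R) \<longrightarrow> J \<subseteq> \<Union>Js \<longrightarrow> (\<exists>J'\<in>Js. J \<subseteq> J'))"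

definition ideals_prod :: "('a, 'b) ring_scheme \<Rightarrow> (nat \<Rightarrow> 'a set) \<Rightarrow> nat list \<Rightarrow> 'a set" where
  "ideals_prod R Is js = foldr (\<lambda>j acc. Is j \<cdot>\<^bsub>R\<^esub> acc) js (carrier R)"

end

theory Submission
  imports Defs
begin

text \<open>
  If at least k + 1 of the I_l are principal the hypothesis applies directly, so let I_j be
  non-principal and assume the product omitting j is not in I. For x \<in> I_j, replacing I_j
  by the principal u-ideal (x) keeps the product inside I and adds a principal member, so
  the product omitting some index i lies in I; here i \<noteq> j, as the product omitting j is
  unchanged, hence x Q_i \<subseteq> I for the product Q_i of the I_l with l \<noteq> i, j. Thus I_j is
  covered by the finitely many colon ideals (I : Q_i), and being a u-ideal it lies in one
  of them: the product I_j Q_i omitting i lies in I.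
\<close>

lemma ideal_prod_mono:
  assumes "I \<subseteq> I'" "J \<subseteq> J'"
  shows "I \<cdot>\<^bsub>R\<^esub> J \<subseteq> I' \<cdot>\<^bsub>R\<^esub> J'"
proof
  fix s assume "s \<in> I \<cdot>\<^bsub>R\<^esub> J" thus "s \<in> I' \<cdot>\<^bsub>R\<^esub> J'"
    by (induct s rule: ideal_prod.induct) (use assms in \<open>auto intro: ideal_prod.intros\<close>)
qed

lemma (in ring) ideal_prod_subsetI:
  assumes "ideal K R" "\<And>i j. i \<in> I \<Longrightarrow> j \<in> J \<Longrightarrow> i \<otimes> j \<in> K"
  shows "I \<cdot> J \<subseteq> K"
proof
  fix s assume "s \<in> I \<cdot> J" thus "s \<in> K"
    by (induct s rule: ideal_prod.induct)
       (auto simp: assms additive_subgroup.a_closed ideal.axioms(1))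
qed

definition ideal_colon :: "('a, 'b) ring_scheme \<Rightarrow> 'a set \<Rightarrow> 'a set \<Rightarrow> 'a set" where
  "ideal_colon R I P = {y \<in> carrier R. \<forall>p\<in>P. y \<otimes>\<^bsub>R\<^esub> p \<in> I}"

lemma (in cring) ideal_colon_is_ideal:
  assumes "ideal I R" "P \<subseteq> carrier R"
  shows "ideal (ideal_colon R I P) R"
proof (rule idealI)
  show "ring R" by (rule ring_axioms)
  show "subgroup (ideal_colon R I P) (add_monoid R)"
  proof (rule add.subgroupI)
    show "ideal_colon R I P \<subseteq> carrier R"
      by (auto simp: ideal_colon_def)
    have "\<zero> \<in> ideal_colon R I P"
      using assms by (auto simp: ideal_colon_def subsetD additive_subgroup.zero_closed ideal.axioms(1))
    then show "ideal_colon R I P \<noteq> {}" by blast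
  next
    fix a b assume "a \<in> ideal_colon R I P" "b \<in> ideal_colon R I P"
    then show "\<ominus> a \<in> ideal_colon R I P" and "a \<oplus> b \<in> ideal_colon R I P"
      using assms
      by (auto simp: ideal_colon_def l_minus l_distr subsetD
               additive_subgroup.a_closed additive_subgroup.a_inv_closed ideal.axioms(1))
  qed
next
  fix a x assume a: "a \<in> ideal_colon R I P" and x: "x \<in> carrier R"
  then show "x \<otimes> a \<in> ideal_colon R I P"
    using assms by (auto simp: ideal_colon_def m_assoc ideal.I_l_closed)
  have "a \<otimes> x \<otimes> p = x \<otimes> (a \<otimes> p)" if "p \<in> P" for p
    using a x that assms(2) by (auto simp: ideal_colon_def m_ac)
  then show "a \<otimes> x \<in> ideal_colon R I P"
    using a x assms(1) by (auto simp: ideal_colon_def ideal.I_l_closed)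
qed

lemma (in ring) ideal_prod_subset_iff_colon:
  assumes "ideal I R" "ideal J R"
  shows "J \<cdot> P \<subseteq> I \<longleftrightarrow> J \<subseteq> ideal_colon R I P"
proof
  assume "J \<cdot> P \<subseteq> I"
  then show "J \<subseteq> ideal_colon R I P"
    using ideal.Icarr[OF assms(2)] by (auto simp: ideal_colon_def intro: ideal_prod.prod)
next
  assume "J \<subseteq> ideal_colon R I P"
  then show "J \<cdot> P \<subseteq> I"
    by (intro ideal_prod_subsetI[OF assms(1)]) (auto simp: ideal_colon_def)
qed

lemma (in cring) cgenideal_u_ideal:
  assumes "x \<in> carrier R"
  shows "u_ideal R (PIdl x)"
  unfolding u_ideal_def
proof (intro conjI allI impI)
  show "ideal (PIdl x) R" using assms by (rule cgenideal_ideal)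
  fix Js :: "'a set set"
  assume Js: "\<forall>J'\<in>Js. ideal J' R" and "PIdl x \<subseteq> \<Union>Js"
  then obtain J' where J': "J' \<in> Js" "x \<in> J'"
    using cgenideal_self[OF assms] by blast
  then have "PIdl x \<subseteq> J'"
    using Js by (intro cgenideal_minimal) auto
  with J' show "\<exists>J'\<in>Js. PIdl x \<subseteq> J'" by blast
qed

lemma (in cring) u_ideal_prod_subset_of_principal:
  assumes "u_ideal R J" "ideal I R" "finite S" "\<And>i. i \<in> S \<Longrightarrow> P i \<subseteq> carrier R"
    and "\<And>x. x \<in> J \<Longrightarrow> \<exists>i\<in>S. (PIdl x) \<cdot> P i \<subseteq> I"
  shows "\<exists>i\<in>S. J \<cdot> P i \<subseteq> I"
proof -
  have J: "ideal J R" using assms(1) by (simp add: u_ideal_def)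
  have "J \<subseteq> \<Union> ((\<lambda>i. ideal_colon R I (P i)) ` S)"
  proof
    fix x assume x: "x \<in> J"
    have xc: "x \<in> carrier R" using ideal.Icarr[OF J x] .
    obtain i where "i \<in> S" "(PIdl x) \<cdot> P i \<subseteq> I" using assms(5)[OF x] by blast
    then show "x \<in> \<Union> ((\<lambda>i. ideal_colon R I (P i)) ` S)"
      using ideal_prod_subset_iff_colon[OF assms(2) cgenideal_ideal[OF xc]] cgenideal_self[OF xc]
      by blast
  qed
  moreover have "\<forall>J'\<in>(\<lambda>i. ideal_colon R I (P i)) ` S. ideal J' R"
    using ideal_colon_is_ideal[OF assms(2)] assms(4) by blast
  ultimately have "\<exists>J'\<in>(\<lambda>i. ideal_colon R I (P i)) ` S. J \<subseteq> J'"
    using assms(1,3) unfolding u_ideal_def by blast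
  then obtain i where "i \<in> S" "J \<subseteq> ideal_colon R I (P i)" by blast
  then show ?thesis using ideal_prod_subset_iff_colon[OF assms(2) J] by blast
qed

lemma ideals_prod_mono:
  "(\<And>l. l \<in> set js \<Longrightarrow> A l \<subseteq> B l) \<Longrightarrow> ideals_prod R A js \<subseteq> ideals_prod R B js"
  by (induct js) (simp_all add: ideals_prod_def ideal_prod_mono)

lemma ideals_prod_cong:
  "(\<And>l. l \<in> set js \<Longrightarrow> A l = B l) \<Longrightarrow> ideals_prod R A js = ideals_prod R B js"
  by (induct js) (auto simp: ideals_prod_def)

lemma (in ring) ideals_prod_is_ideal:
  "(\<And>l. l \<in> set js \<Longrightarrow> ideal (A l) R) \<Longrightarrow> ideal (ideals_prod R A js) R"
  by (induct js) (auto simp: ideals_prod_def oneideal ideal_prod_is_ideal)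

lemma (in cring) ideals_prod_extract:
  assumes "distinct js" "j \<in> set js" "\<And>l. l \<in> set js \<Longrightarrow> ideal (A l) R"
  shows "ideals_prod R A js = A j \<cdot> ideals_prod R A (filter (\<lambda>l. l \<noteq> j) js)"
  using assms
proof (induct js)
  case Nil thus ?case by simp
next
  case (Cons a js)
  show ?case
  proof (cases "a = j")
    case True
    with Cons.prems have "filter (\<lambda>l. l \<noteq> j) js = js"
      by (auto simp: filter_id_conv)
    with True show ?thesis by (simp add: ideals_prod_def)
  next
    case False
    define Q where "Q = ideals_prod R A (filter (\<lambda>l. l \<noteq> j) js)"
    have ia: "ideal (A a) R" and ij: "ideal (A j) R" and iQ: "ideal Q R"
      using Cons.prems by (auto simp: Q_def intro!: ideals_prod_is_ideal)
    have "ideals_prod R A (a # js) = A a \<cdot> (A j \<cdot> Q)"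
      using Cons False by (simp add: ideals_prod_def Q_def)
    also have "\<dots> = A j \<cdot> (A a \<cdot> Q)"
      using ia ij iQ by (metis ideal_prod_assoc ideal_prod_commute)
    also have "\<dots> = A j \<cdot> ideals_prod R A (filter (\<lambda>l. l \<noteq> j) (a # js))"
      using False by (simp add: ideals_prod_def Q_def)
    finally show ?thesis .
  qed
qed

definition prod_omitting :: "('a, 'b) ring_scheme \<Rightarrow> (nat \<Rightarrow> 'a set) \<Rightarrow> nat \<Rightarrow> nat \<Rightarrow> 'a set" where
  "prod_omitting R Is n i = ideals_prod R Is (filter (\<lambda>l. l \<noteq> i) [0..<Suc n])"

lemma (in cring) prod_omitting_split:
  assumes "i \<le> n" "j \<le> n" "i \<noteq> j" "\<And>l. l \<le> n \<Longrightarrow> ideal (A l) R"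
  shows "prod_omitting R A n i
           = A j \<cdot> ideals_prod R A (filter (\<lambda>l. l \<noteq> i \<and> l \<noteq> j) [0..<Suc n])"
proof -
  have "prod_omitting R A n i
          = A j \<cdot> ideals_prod R A (filter (\<lambda>l. l \<noteq> j) (filter (\<lambda>l. l \<noteq> i) [0..<Suc n]))"
    unfolding prod_omitting_def
    by (rule ideals_prod_extract) (use assms in \<open>auto simp del: upt_Suc\<close>)
  then show ?thesis by simp
qed

lemma (in cring) prod_omitting_subset_of_principal_subideals:
  assumes j: "j \<le> n" and U: "\<forall>l\<le>n. u_ideal R (Is l)" and I: "ideal I R"
    and principal: "\<And>x. x \<in> Is j \<Longrightarrow> \<exists>i\<le>n. prod_omitting R (Is(j := PIdl x)) n i \<subseteq> I"
  shows "\<exists>i\<le>n. prod_omitting R Is n i \<subseteq> I"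
proof (cases "prod_omitting R Is n j \<subseteq> I")
  case True
  with j show ?thesis by blast
next
  case omit_j: False
  have ideals: "\<And>l. l \<le> n \<Longrightarrow> ideal (Is l) R" using U by (simp add: u_ideal_def)
  define Q where "Q i = ideals_prod R Is (filter (\<lambda>l. l \<noteq> i \<and> l \<noteq> j) [0..<Suc n])" for i
  have Q_carrier: "Q i \<subseteq> carrier R" for i
    using ideals_prod_is_ideal[of "filter (\<lambda>l. l \<noteq> i \<and> l \<noteq> j) [0..<Suc n]" Is] ideals
    by (auto simp del: upt_Suc simp: Q_def dest: ideal.Icarr)
  have "\<exists>i\<in>{..n} - {j}. (PIdl x) \<cdot> Q i \<subseteq> I" if x: "x \<in> Is j" for x
  proof -
    have xc: "x \<in> carrier R" using ideal.Icarr[OF ideals[OF j] x] .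
    define Is' where "Is' = Is(j := PIdl x)"
    obtain i where i: "i \<le> n" "prod_omitting R Is' n i \<subseteq> I"
      using principal[OF x] by (auto simp: Is'_def)
    have "prod_omitting R Is' n j = prod_omitting R Is n j"
      unfolding prod_omitting_def by (rule ideals_prod_cong) (simp del: upt_Suc add: Is'_def)
    with i omit_j have "i \<noteq> j" by metis
    have "prod_omitting R Is' n i
            = Is' j \<cdot> ideals_prod R Is' (filter (\<lambda>l. l \<noteq> i \<and> l \<noteq> j) [0..<Suc n])"
      by (rule prod_omitting_split[OF i(1) j \<open>i \<noteq> j\<close>])
        (use ideals cgenideal_ideal[OF xc] in \<open>simp add: Is'_def\<close>)
    also have "Is' j = PIdl x" by (simp add: Is'_def)
    also have "ideals_prod R Is' (filter (\<lambda>l. l \<noteq> i \<and> l \<noteq> j) [0..<Suc n]) = Q i"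
      unfolding Q_def by (rule ideals_prod_cong) (simp del: upt_Suc add: Is'_def)
    finally have "(PIdl x) \<cdot> Q i \<subseteq> I"
      using i(2) by (simp only:)
    then show ?thesis using i(1) \<open>i \<noteq> j\<close> by blast
  qed
  then obtain i where i: "i \<in> {..n} - {j}" "Is j \<cdot> Q i \<subseteq> I"
    using u_ideal_prod_subset_of_principal[of "Is j" I "{..n} - {j}" Q] Q_carrier U j I by blast
  moreover have "prod_omitting R Is n i = Is j \<cdot> Q i"
    unfolding Q_def using i(1) j ideals by (intro prod_omitting_split) auto
  ultimately have "prod_omitting R Is n i \<subseteq> I" by (simp only:)
  then show ?thesis using i(1) by blast
qed

lemma card_fun_upd_satisfying:
  fixes n :: nat
  assumes "j \<le> n" "\<not> P (f j)" "P a"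
  shows "card {l. l \<le> n \<and> P ((f(j := a)) l)} = Suc (card {l. l \<le> n \<and> P (f l)})"
proof -
  have "{l. l \<le> n \<and> P ((f(j := a)) l)} = insert j {l. l \<le> n \<and> P (f l)}"
    using assms by auto
  moreover have "finite {l. l \<le> n \<and> P (f l)}"
    by (rule finite_subset[of _ "{..n}"]) auto
  ultimately show ?thesis using assms(2) by simp
qed

theorem lemma5:
  fixes R :: "('a, 'b) ring_scheme" and n k :: nat and I :: "'a set"
  assumes "cring R"
    and "n \<ge> 1"
    and "n_absorbing R n I"
    and "k \<le> n"
    and "\<forall>Is :: nat \<Rightarrow> 'a set.
           (\<forall>j\<le>n. u_ideal R (Is j)) \<longrightarrow>
           ideals_prod R Is [0..<Suc n] \<subseteq> I \<longrightarrow>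
           card {j. j \<le> n \<and> principalideal (Is j) R} \<ge> k + 1 \<longrightarrow>
           (\<exists>i\<le>n. ideals_prod R Is (filter (\<lambda>j. j \<noteq> i) [0..<Suc n]) \<subseteq> I)"
  shows "\<forall>Is :: nat \<Rightarrow> 'a set.
           (\<forall>j\<le>n. u_ideal R (Is j)) \<longrightarrow>
           ideals_prod R Is [0..<Suc n] \<subseteq> I \<longrightarrow>
           card {j. j \<le> n \<and> principalideal (Is j) R} \<ge> k \<longrightarrow>
           (\<exists>i\<le>n. ideals_prod R Is (filter (\<lambda>j. j \<noteq> i) [0..<Suc n]) \<subseteq> I)"
proof (intro allI impI)
  interpret cring R by fact
  have I: "ideal I R" using assms(3) by (simp add: n_absorbing_def)
  fix Is :: "nat \<Rightarrow> 'a set"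
  assume U: "\<forall>j\<le>n. u_ideal R (Is j)" and P: "ideals_prod R Is [0..<Suc n] \<subseteq> I"
    and C: "card {j. j \<le> n \<and> principalideal (Is j) R} \<ge> k"
  show "\<exists>i\<le>n. ideals_prod R Is (filter (\<lambda>j. j \<noteq> i) [0..<Suc n]) \<subseteq> I"
  proof (cases "card {j. j \<le> n \<and> principalideal (Is j) R} \<ge> k + 1")
    case True
    then show ?thesis using assms(5) U P by blast
  next
    case False
    with assms(4) have "{j. j \<le> n \<and> principalideal (Is j) R} \<noteq> {..n}" by auto
    then obtain j where j: "j \<le> n" "\<not> principalideal (Is j) R" by auto
    have "\<exists>i\<le>n. prod_omitting R Is n i \<subseteq> I"
    proof (rule prod_omitting_subset_of_principal_subideals[OF j(1) U I])
      fix x assume x: "x \<in> Is j"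
      let ?Is' = "Is(j := PIdl\<^bsub>R\<^esub> x)"
      have j_ideal: "ideal (Is j) R" using U j(1) by (simp add: u_ideal_def)
      have xc: "x \<in> carrier R" using ideal.Icarr[OF j_ideal x] .
      have "ideals_prod R ?Is' [0..<Suc n] \<subseteq> ideals_prod R Is [0..<Suc n]"
        using cgenideal_minimal[OF j_ideal x] by (intro ideals_prod_mono) simp
      with P have "ideals_prod R ?Is' [0..<Suc n] \<subseteq> I" by blast
      moreover have "\<forall>l\<le>n. u_ideal R (?Is' l)"
        using U cgenideal_u_ideal[OF xc] by simp
      moreover have "card {l. l \<le> n \<and> principalideal (?Is' l) R} \<ge> k + 1"
        using card_fun_upd_satisfying[where P = "\<lambda>J. principalideal J R" and f = Is,
            OF j cgenideal_is_principalideal[OF xc]] C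
        by simp
      ultimately show "\<exists>i\<le>n. prod_omitting R ?Is' n i \<subseteq> I"
        using assms(5) unfolding prod_omitting_def by blast
    qed
    then show ?thesis unfolding prod_omitting_def .
  qed
qed
end
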